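(* Let $S$ be training data, $\mathrm{NN}(\{m_l\}_{l=0}^L)$ a fully-connected network, and $\mathcal T_S$ a one-layer lifting to a one-layer deeper $\mathrm{NN}'$. If a parameter $\theta_{\mathrm{shal}}$ of $\mathrm{NN}$ satisfies $\nabla_\theta R_S(\theta_{\mathrm{shal}})=0$, then $\nabla_{\theta'}R_S(\theta'_{\mathrm{deep}})=0$ for every $\theta'_{\mathrm{deep}}\in\mathcal T_S(\theta_{\mathrm{shal}})$.
   Context: $\sigma$ has a non-constant linear segment; $\sigma$ and $\ell(\cdot,y)$ are assigned fixed (sub)derivatives $\sigma'$, $\nabla\ell$ (gradient in first argument) at every point, agreeing with classical derivatives wherever these exist. Network: $\theta=(W^{[1]},b^{[1]},\dots,W^{[L]},b^{[L]})$, $W^{[l]}\in\mathbb R^{m_l\times m_{l-1}}$, $\theta|_l=(W^{[l]},b^{[l]})$; $f^{[0]}_\theta(x)=x$, $f^{[l]}_\theta=\sigma(W^{[l]}f^{[l-1]}_\theta+b^{[l]})$ for hidden $l$, $f_\theta=f^{[L]}_\theta=W^{[L]}f^{[L-1]}_\theta+b^{[L]}$. Data $S=\{(x_i,y_i)\}_{i=1}^n$, $S_x=\{x_i\}$, $\mathbb E_S h=\frac1n\sum_i h(x_i,y_i)$, $R_S(\theta)=\mathbb E_S\ell(f_\theta(x),y)$. Gradient (for any layered network, with "predecessor/successor" following the layer order): $g^{[L]}_\theta=\mathbf 1$, $g^{[l]}_\theta(x)=\sigma'(W^{[l]}f^{[l^-]}_\theta(x)+b^{[l]})$ for hidden $l$;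 $z^{[L]}_\theta(x)=\nabla\ell(f_\theta(x),y)$, $z^{[l]}_\theta=(W^{[l^+]})^\top(z^{[l^+]}_\theta\circ g^{[l^+]}_\theta)$ where $l^-,l^+$ are the predecessor and successor of $l$; $\nabla_{W^{[l]}}R_S=\mathbb E_S[(z^{[l]}_\theta\circ g^{[l]}_\theta)(f^{[l^-]}_\theta)^\top]$, $\nabla_{b^{[l]}}R_S=\mathbb E_S[z^{[l]}_\theta\circ g^{[l]}_\theta]$; $\nabla_\theta R_S(\theta)=0$ means all these vanish. Affine subdomain: open interval $(a,b)$ with $\lambda\ne0,\mu$ such that $\sigma(x)=\lambda x+\mu$ on $(a,b)$. One-layer deeper: $\mathrm{NN}'$ with layers $0,1,\dots,q,\hat q,q+1,\dots,L$ ($q\in\{0,\dots,L-1\}$, $\hat q$ a new hidden layer with activation $\sigma$), $m'_l=m_l$ for $l\ne\hat q$, $m'_{\hat q}\ge\min\{m_q,m_{q+1}\}$. One-layer lifting: $\mathcal T_S(\theta)$ is the set of $\theta'$ with (i) $\theta'|_l=\theta|_l$ for $l\in[q]\cup[q+2:L]$, $(W'^{[\hat q]},b'^{[\hat q]})\in\mathbb R^{m'_{\hat q}\times m_q}\times\mathbb R^{m'_{\hat q}}$, $(W'^{[q+1]},b'^{[q+1]})\in\mathbb R^{m_{q+1}\times m'_{\hat q}}\times\mathbb R^{m_{q+1}}$; (ii) for each $j\in[m'_{\hat q}]$ an affine subdomain $(a_j,b_j)$ with constants $\lambda_j,\mu_j$ such that $(W'^{[\hat q]}f^{[q]}_{\theta'}(x)+b'^{[\hat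 q]})_j\in(a_j,b_j)$ for all $x\in S_x$; (iii) $W'^{[q+1]}\mathrm{diag}(\lambda)W'^{[\hat q]}=W^{[q+1]}$ and $W'^{[q+1]}\mathrm{diag}(\lambda)b'^{[\hat q]}+W'^{[q+1]}\mu+b'^{[q+1]}=b^{[q+1]}$, with $\lambda=(\lambda_j)$, $\mu=(\mu_j)$. *)

theory Defs
  imports "HOL-Analysis.Analysis"
begin

text \<open>Vectors and matrices of varying dimension are represented as functions on nat;
  only the entries inside the stated dimensions are ever read.\<close>
type_synonym vec = "nat \<Rightarrow> real"
type_synonym mat = "nat \<Rightarrow> nat \<Rightarrow> real"

definition affine :: "nat \<Rightarrow> nat \<Rightarrow> mat \<Rightarrow> vec \<Rightarrow> vec \<Rightarrow> vec" where
  "affine m n W b v = (\<lambda>i. if i < m then (\<Sum>j<n. W i j * v j) + b i else 0)"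

text \<open>Fully-connected network with widths ms = [m_0,...,m_L] and parameters
  th = [(W^[1],b^[1]),...,(W^[L],b^[L])] (list index k holds layer k+1).
  fwd ... x l is f^[l](x); the last layer (l = L = length th) is affine.\<close>
primrec fwd :: "(real \<Rightarrow> real) \<Rightarrow> nat list \<Rightarrow> (mat \<times> vec) list \<Rightarrow> vec \<Rightarrow> nat \<Rightarrow> vec" where
  "fwd \<sigma> ms th x 0 = x"
| "fwd \<sigma> ms th x (Suc k) =
     (let u = affine (ms ! Suc k) (ms ! k) (fst (th ! k)) (snd (th ! k)) (fwd \<sigma> ms th x k)
      in if Suc k = length th then u else (\<lambda>i. if i < ms ! Suc k then \<sigma> (u i) else 0))"

definition pre :: "(real \<Rightarrow> real) \<Rightarrow> nat list \<Rightarrow> (mat \<times> vec) list \<Rightarrow> vec \<Rightarrow> nat \<Rightarrow> vec" where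
  "pre \<sigma> ms th x l = affine (ms ! l) (ms ! (l - 1)) (fst (th ! (l - 1))) (snd (th ! (l - 1)))
                        (fwd \<sigma> ms th x (l - 1))"

definition gfac :: "(real \<Rightarrow> real) \<Rightarrow> (real \<Rightarrow> real) \<Rightarrow> nat list \<Rightarrow> (mat \<times> vec) list \<Rightarrow> vec \<Rightarrow> nat \<Rightarrow> vec" where
  "gfac \<sigma> \<sigma>' ms th x l = (if l = length th then (\<lambda>i. 1) else (\<lambda>i. \<sigma>' (pre \<sigma> ms th x l i)))"

text \<open>Backward signals: zr ... d is z^[L-d].\<close>
primrec zr :: "(real \<Rightarrow> real) \<Rightarrow> (real \<Rightarrow> real) \<Rightarrow> (vec \<Rightarrow> 'y \<Rightarrow> vec) \<Rightarrow> nat list \<Rightarrow>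
               (mat \<times> vec) list \<Rightarrow> vec \<Rightarrow> 'y \<Rightarrow> nat \<Rightarrow> vec" where
  "zr \<sigma> \<sigma>' dl ms th x y 0 = dl (fwd \<sigma> ms th x (length th)) y"
| "zr \<sigma> \<sigma>' dl ms th x y (Suc d) =
     (let l = length th - d in
      (\<lambda>j. \<Sum>i< ms ! l. fst (th ! (l - 1)) i j * (zr \<sigma> \<sigma>' dl ms th x y d i * gfac \<sigma> \<sigma>' ms th x l i)))"

definition zv :: "(real \<Rightarrow> real) \<Rightarrow> (real \<Rightarrow> real) \<Rightarrow> (vec \<Rightarrow> 'y \<Rightarrow> vec) \<Rightarrow> nat list \<Rightarrow>
               (mat \<times> vec) list \<Rightarrow> vec \<Rightarrow> 'y \<Rightarrow> nat \<Rightarrow> vec" where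
  "zv \<sigma> \<sigma>' dl ms th x y l = zr \<sigma> \<sigma>' dl ms th x y (length th - l)"

definition avg :: "(vec \<times> 'y) list \<Rightarrow> (vec \<Rightarrow> 'y \<Rightarrow> real) \<Rightarrow> real" where
  "avg S h = (\<Sum>p\<leftarrow>S. h (fst p) (snd p)) / real (length S)"

definition critical :: "(real \<Rightarrow> real) \<Rightarrow> (real \<Rightarrow> real) \<Rightarrow> (vec \<Rightarrow> 'y \<Rightarrow> vec) \<Rightarrow> nat list \<Rightarrow>
                        (mat \<times> vec) list \<Rightarrow> (vec \<times> 'y) list \<Rightarrow> bool" where
  "critical \<sigma> \<sigma>' dl ms th S \<longleftrightarrow>
     (\<forall>l\<in>{1..length th}.
        (\<forall>i < ms ! l. \<forall>j < ms ! (l - 1).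
           avg S (\<lambda>x y. zv \<sigma> \<sigma>' dl ms th x y l i * gfac \<sigma> \<sigma>' ms th x l i * fwd \<sigma> ms th x (l - 1) j) = 0)
      \<and> (\<forall>i < ms ! l.
           avg S (\<lambda>x y. zv \<sigma> \<sigma>' dl ms th x y l i * gfac \<sigma> \<sigma>' ms th x l i) = 0))"

definition deeper_dims :: "nat list \<Rightarrow> nat \<Rightarrow> nat \<Rightarrow> nat list" where
  "deeper_dims ms q mh = take (Suc q) ms @ [mh] @ drop (Suc q) ms"

definition layer_eq :: "nat \<Rightarrow> nat \<Rightarrow> mat \<times> vec \<Rightarrow> mat \<times> vec \<Rightarrow> bool" where
  "layer_eq m n p p' \<longleftrightarrow> (\<forall>i<m. (\<forall>j<n. fst p i j = fst p' i j) \<and> snd p i = snd p' i)"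

text \<open>One-layer lifting T_S(theta). In the list theta', index k<q holds layer k+1,
  index q holds layer q-hat, index q+1 holds layer q+1, index k+1 (k>=q+1) holds layer k+1.\<close>
definition lifting :: "(real \<Rightarrow> real) \<Rightarrow> nat list \<Rightarrow> (vec \<times> 'y) list \<Rightarrow> nat \<Rightarrow> nat \<Rightarrow>
                       (mat \<times> vec) list \<Rightarrow> (mat \<times> vec) list set" where
  "lifting \<sigma> ms S q mh th =
    {th'. length th' = Suc (length th)
      \<and> (\<forall>k<q. layer_eq (ms ! Suc k) (ms ! k) (th' ! k) (th ! k))
      \<and> (\<forall>k. Suc q \<le> k \<and> k < length th \<longrightarrow> layer_eq (ms ! Suc k) (ms ! k) (th' ! Suc k) (th ! k))
      \<and> (\<exists>lam mu :: nat \<Rightarrow> real.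
           (\<forall>j<mh. \<exists>a b. a < b \<and> lam j \<noteq> 0 \<and> (\<forall>t. a < t \<and> t < b \<longrightarrow> \<sigma> t = lam j * t + mu j)
                 \<and> (\<forall>x\<in>fst ` set S. a < pre \<sigma> (deeper_dims ms q mh) th' x (Suc q) j
                                    \<and> pre \<sigma> (deeper_dims ms q mh) th' x (Suc q) j < b))
         \<and> (\<forall>i < ms ! Suc q. \<forall>k < ms ! q.
              (\<Sum>j<mh. fst (th' ! Suc q) i j * lam j * fst (th' ! q) j k) = fst (th ! q) i k)
         \<and> (\<forall>i < ms ! Suc q.
              (\<Sum>j<mh. fst (th' ! Suc q) i j * lam j * snd (th' ! q) j)
              + (\<Sum>j<mh. fst (th' ! Suc q) i j * mu j) + snd (th' ! Suc q) i = snd (th ! q) i))}"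

text \<open>G is the classical (Frechet) gradient at v of f restricted to R^m
  (vectors supported on the first m coordinates).\<close>
definition grad_at :: "(vec \<Rightarrow> real) \<Rightarrow> nat \<Rightarrow> vec \<Rightarrow> vec \<Rightarrow> bool" where
  "grad_at f m v G \<longleftrightarrow>
     (\<forall>e>0. \<exists>d>0. \<forall>h. (\<forall>i\<ge>m. h i = 0) \<and> sqrt (\<Sum>i<m. (h i)\<^sup>2) < d \<longrightarrow>
        \<bar>f (\<lambda>i. v i + h i) - f v - (\<Sum>i<m. G i * h i)\<bar> \<le> e * sqrt (\<Sum>i<m. (h i)\<^sup>2))"

end

theory Submission imports Defs begin

text \<open>On the data, every unit of the inserted layer works inside an affine piece of \<open>\<sigma>\<close>,
  with slope \<open>lam j\<close> and intercept \<open>mu j\<close>. By condition (iii) of the lifting, the new layer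
  composed with the new layer \<open>q + 1\<close> is then the old layer \<open>q + 1\<close>, so the lifted network has
  the same pre-activations, activations and backpropagated errors in all old layers. The error
  of a new unit \<open>j\<close> is \<open>lam j\<close> times a combination of the errors of layer \<open>q + 1\<close>, and its
  activation is affine in those of layer \<open>q\<close>. Hence every gradient entry of the lifted network
  is a linear combination of gradient entries of the original one, which all vanish.\<close>

definition delta :: "(real \<Rightarrow> real) \<Rightarrow> (real \<Rightarrow> real) \<Rightarrow> (vec \<Rightarrow> 'y \<Rightarrow> vec) \<Rightarrow> nat list \<Rightarrow>
                    (mat \<times> vec) list \<Rightarrow> vec \<Rightarrow> 'y \<Rightarrow> nat \<Rightarrow> vec" where
  "delta \<sigma> \<sigma>' dl ms th x y l = (\<lambda>i. zv \<sigma> \<sigma>' dl ms th x y l i * gfac \<sigma> \<sigma>' ms th x l i)"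

definition grad_W :: "(real \<Rightarrow> real) \<Rightarrow> (real \<Rightarrow> real) \<Rightarrow> (vec \<Rightarrow> 'y \<Rightarrow> vec) \<Rightarrow> nat list \<Rightarrow>
                     (mat \<times> vec) list \<Rightarrow> (vec \<times> 'y) list \<Rightarrow> nat \<Rightarrow> nat \<Rightarrow> nat \<Rightarrow> real" where
  "grad_W \<sigma> \<sigma>' dl ms th S l i j =
     avg S (\<lambda>x y. delta \<sigma> \<sigma>' dl ms th x y l i * fwd \<sigma> ms th x (l - 1) j)"

definition grad_b :: "(real \<Rightarrow> real) \<Rightarrow> (real \<Rightarrow> real) \<Rightarrow> (vec \<Rightarrow> 'y \<Rightarrow> vec) \<Rightarrow> nat list \<Rightarrow>
                     (mat \<times> vec) list \<Rightarrow> (vec \<times> 'y) list \<Rightarrow> nat \<Rightarrow> nat \<Rightarrow> real" where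
  "grad_b \<sigma> \<sigma>' dl ms th S l i = avg S (\<lambda>x y. delta \<sigma> \<sigma>' dl ms th x y l i)"

lemma critical_iff_grad:
  "critical \<sigma> \<sigma>' dl ms th S \<longleftrightarrow>
     (\<forall>l\<in>{1..length th}.
        (\<forall>i < ms ! l. \<forall>j < ms ! (l - 1). grad_W \<sigma> \<sigma>' dl ms th S l i j = 0)
      \<and> (\<forall>i < ms ! l. grad_b \<sigma> \<sigma>' dl ms th S l i = 0))"
  by (simp add: critical_def grad_W_def grad_b_def delta_def)

lemma zv_last: "zv \<sigma> \<sigma>' dl ms th x y (length th) = dl (fwd \<sigma> ms th x (length th)) y"
  by (simp add: zv_def)

lemma zv_eq_sum_delta:
  assumes "l < length th"
  shows "zv \<sigma> \<sigma>' dl ms th x y l j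
    = (\<Sum>i<ms ! Suc l. fst (th ! l) i j * delta \<sigma> \<sigma>' dl ms th x y (Suc l) i)"
proof -
  have "length th - l = Suc (length th - Suc l)" "length th - (length th - Suc l) = Suc l"
    using assms by auto
  then show ?thesis by (simp add: zv_def delta_def)
qed

lemma fwd_Suc_pre:
  "fwd \<sigma> ms th x (Suc k) = (if Suc k = length th then pre \<sigma> ms th x (Suc k)
     else (\<lambda>i. if i < ms ! Suc k then \<sigma> (pre \<sigma> ms th x (Suc k) i) else 0))"
  by (simp only: fwd.simps pre_def Let_def diff_Suc_1)

declare fwd.simps(2) [simp del]

lemma fwd_Suc_eq_if_pre_eq:
  assumes "pre \<sigma> ms' th' x (Suc k') = pre \<sigma> ms th x (Suc k)" "ms' ! Suc k' = ms ! Suc k"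
    and "Suc k' = length th' \<longleftrightarrow> Suc k = length th"
  shows "fwd \<sigma> ms' th' x (Suc k') = fwd \<sigma> ms th x (Suc k)"
  unfolding fwd_Suc_pre assms(1,2,3) ..

lemma avg_cong: "(\<And>x y. (x, y) \<in> set S \<Longrightarrow> h x y = h' x y) \<Longrightarrow> avg S h = avg S h'"
  unfolding avg_def by (metis (mono_tags, lifting) map_eq_conv prod.collapse)

lemma avg_sum: "finite A \<Longrightarrow> avg S (\<lambda>x y. \<Sum>k\<in>A. f k x y) = (\<Sum>k\<in>A. avg S (f k))"
proof -
  have "(\<Sum>p\<leftarrow>S. \<Sum>k\<in>A. f k (fst p) (snd p)) = (\<Sum>k\<in>A. \<Sum>p\<leftarrow>S. f k (fst p) (snd p))"
    by (induction S) (simp_all add: sum.distrib)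
  then show "avg S (\<lambda>x y. \<Sum>k\<in>A. f k x y) = (\<Sum>k\<in>A. avg S (f k))"
    by (simp add: avg_def sum_divide_distrib)
qed

lemma avg_mult: "avg S (\<lambda>x y. c * h x y) = c * avg S h"
  by (simp add: avg_def sum_list_const_mult)

lemma avg_add: "avg S (\<lambda>x y. f x y + g x y) = avg S f + avg S g"
  by (simp add: avg_def sum_list_addf add_divide_distrib)

lemma affine_layer_eq:
  "layer_eq m n p p' \<Longrightarrow> affine m n (fst p) (snd p) v = affine m n (fst p') (snd p') v"
  unfolding affine_def layer_eq_def by (auto intro!: ext sum.cong)

text \<open>Condition (iii) of the lifting: the inserted layer of affine units followed by the new
  layer \<open>q + 1\<close> computes the old layer \<open>q + 1\<close>.\<close>
lemma affine_comp_diagonal: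
  assumes "\<forall>i<m. \<forall>k<n. (\<Sum>j<mh. A i j * lam j * B j k) = W i k"
    and "\<forall>i<m. (\<Sum>j<mh. A i j * lam j * c j) + (\<Sum>j<mh. A i j * mu j) + a i = b i"
  shows "affine m mh A a (\<lambda>j. if j < mh then lam j * affine mh n B c v j + mu j else 0)
       = affine m n W b v"
proof (rule ext)
  fix i
  show "affine m mh A a (\<lambda>j. if j < mh then lam j * affine mh n B c v j + mu j else 0) i
      = affine m n W b v i"
  proof (cases "i < m")
    case True
    have "(\<Sum>j<mh. A i j * (if j < mh then lam j * affine mh n B c v j + mu j else 0))
        = (\<Sum>j<mh. (\<Sum>k<n. A i j * lam j * B j k * v k) + A i j * lam j * c j + A i j * mu j)"
      by (rule sum.cong) (auto simp: affine_def algebra_simps sum_distrib_left)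
    also have "\<dots> = (\<Sum>k<n. (\<Sum>j<mh. A i j * lam j * B j k) * v k)
        + (\<Sum>j<mh. A i j * lam j * c j) + (\<Sum>j<mh. A i j * mu j)"
      by (simp add: sum.distrib sum_distrib_right sum.swap[where A="{..<mh}"])
    also have "\<dots> = (\<Sum>k<n. W i k * v k) + b i - a i"
      using assms True by (simp add: eq_diff_eq add.assoc)
    finally show ?thesis using True by (simp add: affine_def)
  qed (simp add: affine_def)
qed

lemma sum_transpose_diagonal:
  fixes A B :: "nat \<Rightarrow> nat \<Rightarrow> real"
  assumes "\<forall>i<m. (\<Sum>h<mh. A i h * lam h * B h k) = W i k"
  shows "(\<Sum>h<mh. B h k * (lam h * (\<Sum>i<m. A i h * z i))) = (\<Sum>i<m. W i k * z i)"
proof -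
  have "(\<Sum>h<mh. B h k * (lam h * (\<Sum>i<m. A i h * z i))) = (\<Sum>i<m. (\<Sum>h<mh. A i h * lam h * B h k) * z i)"
    by (simp add: sum_distrib_left sum_distrib_right sum.swap[where A="{..<mh}"] mult_ac)
  then show ?thesis using assms by simp
qed

lemma derivative_on_affine_piece:
  assumes deriv: "\<And>t. \<sigma> differentiable (at t) \<Longrightarrow> (\<sigma> has_real_derivative \<sigma>' t) (at t)"
    and piece: "\<forall>s. a < s \<and> s < b \<longrightarrow> \<sigma> s = c * s + d" and "a < t" "t < b"
  shows "\<sigma>' t = c"
proof -
  have "((\<lambda>u. c * u + d) has_real_derivative c) (at t)"
    by (auto intro!: derivative_eq_intros)
  then have "(\<sigma> has_real_derivative c) (at t)"
    by (rule has_field_derivative_transform_within_open[where S="{a<..<b}"]) (use assms in auto)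
  then show ?thesis
    using deriv DERIV_unique real_differentiable_def by blast
qed

lemma nth_deeper_dims_le: "k \<le> q \<Longrightarrow> q < length ms \<Longrightarrow> deeper_dims ms q mh ! k = ms ! k"
  by (simp add: deeper_dims_def nth_append)

lemma nth_deeper_dims_new: "q < length ms \<Longrightarrow> deeper_dims ms q mh ! Suc q = mh"
  by (simp add: deeper_dims_def nth_append)

lemma nth_deeper_dims_Suc:
  "Suc q \<le> k \<Longrightarrow> k < length ms \<Longrightarrow> deeper_dims ms q mh ! Suc k = ms ! k"
  by (simp add: deeper_dims_def nth_append min_def Suc_diff_le)

section \<open>The lifted network\<close>

locale one_layer_lifting =
  fixes \<sigma> \<sigma>' :: "real \<Rightarrow> real" and dl :: "vec \<Rightarrow> 'y \<Rightarrow> vec"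
    and ms :: "nat list" and th th' :: "(mat \<times> vec) list" and S :: "(vec \<times> 'y) list"
    and q mh :: nat and lam mu :: "nat \<Rightarrow> real"
  assumes sigma_deriv: "\<And>t. \<sigma> differentiable (at t) \<Longrightarrow> (\<sigma> has_real_derivative \<sigma>' t) (at t)"
    and length_ms: "length ms = Suc (length th)"
    and q_less: "q < length th"
    and length_th': "length th' = Suc (length th)"
    and layers_below: "\<forall>k<q. layer_eq (ms ! Suc k) (ms ! k) (th' ! k) (th ! k)"
    and layers_above:
      "\<forall>k. Suc q \<le> k \<and> k < length th \<longrightarrow> layer_eq (ms ! Suc k) (ms ! k) (th' ! Suc k) (th ! k)"
    and affine_on_data: "\<forall>j<mh. \<exists>a b. (\<forall>t. a < t \<and> t < b \<longrightarrow> \<sigma> t = lam j * t + mu j)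
         \<and> (\<forall>x\<in>fst ` set S. a < pre \<sigma> (deeper_dims ms q mh) th' x (Suc q) j
                              \<and> pre \<sigma> (deeper_dims ms q mh) th' x (Suc q) j < b)"
    and weight_factor: "\<forall>i < ms ! Suc q. \<forall>k < ms ! q.
         (\<Sum>j<mh. fst (th' ! Suc q) i j * lam j * fst (th' ! q) j k) = fst (th ! q) i k"
    and bias_factor: "\<forall>i < ms ! Suc q.
         (\<Sum>j<mh. fst (th' ! Suc q) i j * lam j * snd (th' ! q) j)
         + (\<Sum>j<mh. fst (th' ! Suc q) i j * mu j) + snd (th' ! Suc q) i = snd (th ! q) i"
begin

abbreviation ms' :: "nat list" where "ms' \<equiv> deeper_dims ms q mh"

lemma dims_below: "k \<le> q \<Longrightarrow> ms' ! k = ms ! k"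
  using nth_deeper_dims_le q_less length_ms by simp

lemma dims_new: "ms' ! Suc q = mh"
  using nth_deeper_dims_new q_less length_ms by simp

lemma dims_above: "Suc q \<le> k \<Longrightarrow> k \<le> length th \<Longrightarrow> ms' ! Suc k = ms ! k"
  using nth_deeper_dims_Suc length_ms by simp

lemma fwd_below: "k \<le> q \<Longrightarrow> fwd \<sigma> ms' th' x k = fwd \<sigma> ms th x k"
proof (induction k)
  case (Suc k)
  have "affine (ms ! Suc k) (ms ! k) (fst (th' ! k)) (snd (th' ! k)) v
      = affine (ms ! Suc k) (ms ! k) (fst (th ! k)) (snd (th ! k)) v" for v
    using affine_layer_eq layers_below Suc.prems by simp
  then show ?case
    using Suc q_less length_th' dims_below[of k] dims_below[of "Suc k"] by (simp add: fwd.simps Let_def)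
qed simp

lemma pre_below: "Suc k \<le> q \<Longrightarrow> pre \<sigma> ms' th' x (Suc k) = pre \<sigma> ms th x (Suc k)"
  using affine_layer_eq[of "ms ! Suc k" "ms ! k" "th' ! k" "th ! k"]
    layers_below dims_below[of "Suc k"] dims_below[of k] fwd_below[of k]
  by (simp add: pre_def)

lemma pre_new:
  "pre \<sigma> ms' th' x (Suc q) = affine mh (ms ! q) (fst (th' ! q)) (snd (th' ! q)) (fwd \<sigma> ms th x q)"
  by (simp add: pre_def dims_new dims_below fwd_below)

lemma new_layer_affine:
  assumes "x \<in> fst ` set S" "j < mh"
  shows "\<sigma> (pre \<sigma> ms' th' x (Suc q) j) = lam j * pre \<sigma> ms' th' x (Suc q) j + mu j"
    and "\<sigma>' (pre \<sigma> ms' th' x (Suc q) j) = lam j"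
proof -
  obtain a b where piece: "\<forall>t. a < t \<and> t < b \<longrightarrow> \<sigma> t = lam j * t + mu j"
    and "a < pre \<sigma> ms' th' x (Suc q) j" "pre \<sigma> ms' th' x (Suc q) j < b"
    using affine_on_data assms by blast
  then show "\<sigma> (pre \<sigma> ms' th' x (Suc q) j) = lam j * pre \<sigma> ms' th' x (Suc q) j + mu j"
    and "\<sigma>' (pre \<sigma> ms' th' x (Suc q) j) = lam j"
    using derivative_on_affine_piece[OF sigma_deriv piece] by auto
qed

lemma fwd_new:
  assumes "x \<in> fst ` set S"
  shows "fwd \<sigma> ms' th' x (Suc q) = (\<lambda>j. if j < mh then lam j * pre \<sigma> ms' th' x (Suc q) j + mu j else 0)"
  unfolding fwd_Suc_pre using new_layer_affine(1)[OF assms] q_less length_th' dims_new by auto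

lemma pre_after_new:
  assumes "x \<in> fst ` set S"
  shows "pre \<sigma> ms' th' x (Suc (Suc q)) = pre \<sigma> ms th x (Suc q)"
proof -
  have "pre \<sigma> ms' th' x (Suc (Suc q))
      = affine (ms ! Suc q) mh (fst (th' ! Suc q)) (snd (th' ! Suc q)) (fwd \<sigma> ms' th' x (Suc q))"
    using dims_new dims_above[of "Suc q"] q_less by (simp add: pre_def)
  also have "\<dots> = affine (ms ! Suc q) (ms ! q) (fst (th ! q)) (snd (th ! q)) (fwd \<sigma> ms th x q)"
    unfolding fwd_new[OF assms] pre_new
    by (rule affine_comp_diagonal) (use weight_factor bias_factor in auto)
  also have "\<dots> = pre \<sigma> ms th x (Suc q)"
    by (simp add: pre_def)
  finally show ?thesis .
qed

lemma fwd_pre_above: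
  assumes "x \<in> fst ` set S" "Suc q \<le> k" "k \<le> length th"
  shows "fwd \<sigma> ms' th' x (Suc k) = fwd \<sigma> ms th x k \<and> pre \<sigma> ms' th' x (Suc k) = pre \<sigma> ms th x k"
  using assms(2,3)
proof (induction k rule: dec_induct)
  case base
  have "pre \<sigma> ms' th' x (Suc (Suc q)) = pre \<sigma> ms th x (Suc q)"
    by (rule pre_after_new[OF assms(1)])
  moreover have "fwd \<sigma> ms' th' x (Suc (Suc q)) = fwd \<sigma> ms th x (Suc q)"
    using calculation dims_above[of "Suc q"] length_th' base by (intro fwd_Suc_eq_if_pre_eq) auto
  ultimately show ?case by simp
next
  case (step n)
  have "affine (ms ! Suc n) (ms ! n) (fst (th' ! Suc n)) (snd (th' ! Suc n)) v
      = affine (ms ! Suc n) (ms ! n) (fst (th ! n)) (snd (th ! n)) v" for v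
    using affine_layer_eq layers_above step by simp
  moreover have "fwd \<sigma> ms' th' x (Suc n) = fwd \<sigma> ms th x n"
    using step by simp
  ultimately have "pre \<sigma> ms' th' x (Suc (Suc n)) = pre \<sigma> ms th x (Suc n)"
    using dims_above[of "Suc n"] dims_above[of n] step by (simp add: pre_def)
  moreover have "fwd \<sigma> ms' th' x (Suc (Suc n)) = fwd \<sigma> ms th x (Suc n)"
    using calculation dims_above[of "Suc n"] length_th' step by (intro fwd_Suc_eq_if_pre_eq) auto
  ultimately show ?case by simp
qed

lemma gfac_below: "Suc k \<le> q \<Longrightarrow> gfac \<sigma> \<sigma>' ms' th' x (Suc k) = gfac \<sigma> \<sigma>' ms th x (Suc k)"
  using pre_below q_less length_th' by (simp add: gfac_def)

lemma gfac_new: "x \<in> fst ` set S \<Longrightarrow> j < mh \<Longrightarrow> gfac \<sigma> \<sigma>' ms' th' x (Suc q) j = lam j"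
  using new_layer_affine(2) q_less length_th' by (simp add: gfac_def)

lemma gfac_above:
  "x \<in> fst ` set S \<Longrightarrow> Suc q \<le> k \<Longrightarrow> k \<le> length th
    \<Longrightarrow> gfac \<sigma> \<sigma>' ms' th' x (Suc k) = gfac \<sigma> \<sigma>' ms th x k"
  using fwd_pre_above length_th' by (simp add: gfac_def)

lemma delta_above:
  assumes "x \<in> fst ` set S" "Suc q \<le> k" "k \<le> length th" "i < ms ! k"
  shows "delta \<sigma> \<sigma>' dl ms' th' x y (Suc k) i = delta \<sigma> \<sigma>' dl ms th x y k i"
proof -
  have "zv \<sigma> \<sigma>' dl ms' th' x y (Suc k) i = zv \<sigma> \<sigma>' dl ms th x y k i"
    using assms(3,2,4)
  proof (induction k arbitrary: i rule: inc_induct)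
    case base
    have "fwd \<sigma> ms' th' x (length th') = fwd \<sigma> ms th x (length th)"
      using fwd_pre_above[OF assms(1)] q_less length_th' by simp
    then show ?case
      by (metis length_th' zv_last)
  next
    case (step n)
    have "delta \<sigma> \<sigma>' dl ms' th' x y (Suc (Suc n)) i' = delta \<sigma> \<sigma>' dl ms th x y (Suc n) i'"
      if "i' < ms ! Suc n" for i'
      using step that gfac_above[OF assms(1), of "Suc n"] by (simp add: delta_def)
    moreover have "fst (th' ! Suc n) i' i = fst (th ! n) i' i" if "i' < ms ! Suc n" for i'
      using layers_above step that unfolding layer_eq_def by simp
    ultimately show ?case
      using step dims_above[of "Suc n"] length_th'
      by (simp add: zv_eq_sum_delta cong: sum.cong_simp)
  qed
  then show ?thesis
    using gfac_above[OF assms(1-3)] by (simp add: delta_def)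
qed

lemma zv_new:
  assumes "x \<in> fst ` set S"
  shows "zv \<sigma> \<sigma>' dl ms' th' x y (Suc q) j
    = (\<Sum>i<ms ! Suc q. fst (th' ! Suc q) i j * delta \<sigma> \<sigma>' dl ms th x y (Suc q) i)"
  using dims_above[of "Suc q"] q_less length_th'
  by (simp add: zv_eq_sum_delta delta_above[OF assms] cong: sum.cong_simp)

lemma delta_new:
  assumes "x \<in> fst ` set S" "j < mh"
  shows "delta \<sigma> \<sigma>' dl ms' th' x y (Suc q) j
    = lam j * (\<Sum>i<ms ! Suc q. fst (th' ! Suc q) i j * delta \<sigma> \<sigma>' dl ms th x y (Suc q) i)"
  using zv_new[OF assms(1)] gfac_new[OF assms] by (simp add: delta_def mult.commute)

lemma zv_below:
  assumes "x \<in> fst ` set S" "k \<le> q" "j < ms ! k"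
  shows "zv \<sigma> \<sigma>' dl ms' th' x y k j = zv \<sigma> \<sigma>' dl ms th x y k j"
  using assms(2,3)
proof (induction k arbitrary: j rule: inc_induct)
  case base
  have "zv \<sigma> \<sigma>' dl ms' th' x y q j = (\<Sum>h<mh. fst (th' ! q) h j * delta \<sigma> \<sigma>' dl ms' th' x y (Suc q) h)"
    using dims_new q_less length_th' by (simp add: zv_eq_sum_delta)
  also have "\<dots> = (\<Sum>h<mh. fst (th' ! q) h j *
      (lam h * (\<Sum>i<ms ! Suc q. fst (th' ! Suc q) i h * delta \<sigma> \<sigma>' dl ms th x y (Suc q) i)))"
    using delta_new[OF assms(1)] by simp
  also have "\<dots> = (\<Sum>i<ms ! Suc q. fst (th ! q) i j * delta \<sigma> \<sigma>' dl ms th x y (Suc q) i)"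
    by (rule sum_transpose_diagonal) (use weight_factor base in simp)
  also have "\<dots> = zv \<sigma> \<sigma>' dl ms th x y q j"
    using q_less by (simp add: zv_eq_sum_delta)
  finally show ?case .
next
  case (step n)
  have "delta \<sigma> \<sigma>' dl ms' th' x y (Suc n) i = delta \<sigma> \<sigma>' dl ms th x y (Suc n) i"
    if "i < ms ! Suc n" for i
    using step that gfac_below[of n x] by (simp add: delta_def)
  moreover have "fst (th' ! n) i j = fst (th ! n) i j" if "i < ms ! Suc n" for i
    using layers_below step that unfolding layer_eq_def by simp
  ultimately show ?case
    using step dims_below[of "Suc n"] q_less length_th'
    by (simp add: zv_eq_sum_delta cong: sum.cong_simp)
qed

lemma delta_below:
  "x \<in> fst ` set S \<Longrightarrow> Suc k \<le> q \<Longrightarrow> i < ms ! Suc k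
    \<Longrightarrow> delta \<sigma> \<sigma>' dl ms' th' x y (Suc k) i = delta \<sigma> \<sigma>' dl ms th x y (Suc k) i"
  using zv_below gfac_below by (simp add: delta_def)

section \<open>Gradients of the lifted network\<close>

lemma input_in_data: "(x, y) \<in> set S \<Longrightarrow> x \<in> fst ` set S"
  by force

lemma grad_below:
  assumes "Suc k \<le> q" "i < ms ! Suc k"
  shows "grad_W \<sigma> \<sigma>' dl ms' th' S (Suc k) i j = grad_W \<sigma> \<sigma>' dl ms th S (Suc k) i j"
    and "grad_b \<sigma> \<sigma>' dl ms' th' S (Suc k) i = grad_b \<sigma> \<sigma>' dl ms th S (Suc k) i"
  unfolding grad_W_def grad_b_def
  using assms by (auto intro!: avg_cong simp: delta_below input_in_data fwd_below)

lemma grad_new: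
  assumes "i < mh"
  shows "grad_W \<sigma> \<sigma>' dl ms' th' S (Suc q) i j
      = lam i * (\<Sum>i'<ms ! Suc q. fst (th' ! Suc q) i' i * grad_W \<sigma> \<sigma>' dl ms th S (Suc q) i' j)"
    and "grad_b \<sigma> \<sigma>' dl ms' th' S (Suc q) i
      = lam i * (\<Sum>i'<ms ! Suc q. fst (th' ! Suc q) i' i * grad_b \<sigma> \<sigma>' dl ms th S (Suc q) i')"
  unfolding grad_W_def grad_b_def avg_mult[symmetric] avg_sum[OF finite_lessThan, symmetric]
  using assms
  by (auto intro!: avg_cong simp: delta_new input_in_data fwd_below sum_distrib_right mult.assoc)

text \<open>The weights of layer \<open>q + 1\<close> act on the new units, whose outputs are affine in
  the outputs of layer \<open>q\<close>; hence the bias gradient of layer \<open>q + 1\<close> appears as well.\<close>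
lemma grad_after_new:
  assumes "i < ms ! Suc q" "j < mh"
  shows "grad_W \<sigma> \<sigma>' dl ms' th' S (Suc (Suc q)) i j
      = lam j * (\<Sum>k<ms ! q. fst (th' ! q) j k * grad_W \<sigma> \<sigma>' dl ms th S (Suc q) i k)
        + (lam j * snd (th' ! q) j + mu j) * grad_b \<sigma> \<sigma>' dl ms th S (Suc q) i"
proof -
  have "delta \<sigma> \<sigma>' dl ms' th' x y (Suc (Suc q)) i * fwd \<sigma> ms' th' x (Suc q) j
      = lam j * (\<Sum>k<ms ! q. fst (th' ! q) j k * (delta \<sigma> \<sigma>' dl ms th x y (Suc q) i * fwd \<sigma> ms th x q k))
        + (lam j * snd (th' ! q) j + mu j) * delta \<sigma> \<sigma>' dl ms th x y (Suc q) i"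
    if "x \<in> fst ` set S" for x y
    using that assms q_less
    by (simp add: delta_above fwd_new pre_new affine_def sum_distrib_left sum_distrib_right algebra_simps)
  then show ?thesis
    unfolding grad_W_def grad_b_def avg_mult[symmetric] avg_sum[OF finite_lessThan, symmetric]
      avg_add[symmetric]
    by (auto intro!: avg_cong simp: input_in_data)
qed

lemma grad_above:
  assumes "Suc q \<le> k" "k \<le> length th" "i < ms ! k"
  shows "grad_b \<sigma> \<sigma>' dl ms' th' S (Suc k) i = grad_b \<sigma> \<sigma>' dl ms th S k i"
    and "Suc q < k \<Longrightarrow> grad_W \<sigma> \<sigma>' dl ms' th' S (Suc k) i j = grad_W \<sigma> \<sigma>' dl ms th S k i j"
proof -
  show "grad_b \<sigma> \<sigma>' dl ms' th' S (Suc k) i = grad_b \<sigma> \<sigma>' dl ms th S k i"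
    unfolding grad_b_def using assms by (auto intro!: avg_cong simp: delta_above input_in_data)
  assume "Suc q < k"
  then obtain k0 where "k = Suc k0" "Suc q \<le> k0"
    by (cases k) auto
  then show "grad_W \<sigma> \<sigma>' dl ms' th' S (Suc k) i j = grad_W \<sigma> \<sigma>' dl ms th S k i j"
    unfolding grad_W_def using assms
    by (auto intro!: avg_cong simp: delta_above fwd_pre_above input_in_data)
qed

lemma critical_lifted:
  assumes "critical \<sigma> \<sigma>' dl ms th S"
  shows "critical \<sigma> \<sigma>' dl ms' th' S"
proof -
  have W: "grad_W \<sigma> \<sigma>' dl ms th S l i j = 0"
    if "1 \<le> l" "l \<le> length th" "i < ms ! l" "j < ms ! (l - 1)" for l i j
    using assms that by (auto simp: critical_iff_grad)
  have b: "grad_b \<sigma> \<sigma>' dl ms th S l i = 0"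
    if "1 \<le> l" "l \<le> length th" "i < ms ! l" for l i
    using assms that by (auto simp: critical_iff_grad)
  have "(\<forall>i < ms' ! l. \<forall>j < ms' ! (l - 1). grad_W \<sigma> \<sigma>' dl ms' th' S l i j = 0)
      \<and> (\<forall>i < ms' ! l. grad_b \<sigma> \<sigma>' dl ms' th' S l i = 0)"
    if l: "1 \<le> l" "l \<le> Suc (length th)" for l
  proof -
    obtain k where k: "l = Suc k" "k \<le> length th"
      using l by (cases l) auto
    consider (below) "Suc k \<le> q" | (new) "k = q" | (after_new) "k = Suc q" | (above) "Suc q < k"
      by linarith
    then show ?thesis
    proof cases
      case below
      then show ?thesis
        using k grad_below W b q_less dims_below[of l] dims_below[of k] by simp
    next
      case new
      then show ?thesis
        using k grad_new W b q_less dims_new dims_below[of q] by simp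
    next
      case after_new
      then show ?thesis
        using k grad_after_new grad_above(1)[of "Suc q"] W b q_less dims_new dims_above[of "Suc q"]
        by simp
    next
      case above
      then obtain k0 where "k = Suc k0" "Suc q \<le> k0"
        by (cases k) auto
      then show ?thesis
        using k above grad_above W b dims_above[of k] dims_above[of k0] by simp
    qed
  qed
  then show ?thesis
    unfolding critical_iff_grad length_th' by auto
qed

end

lemma ex_one_layer_lifting:
  assumes "th' \<in> lifting \<sigma> ms S q mh th"
    and "\<And>t. \<sigma> differentiable (at t) \<Longrightarrow> (\<sigma> has_real_derivative \<sigma>' t) (at t)"
    and "length ms = Suc (length th)" "q < length th"
  shows "\<exists>lam mu. one_layer_lifting \<sigma> \<sigma>' ms th th' S q mh lam mu"
  using assms unfolding lifting_def one_layer_lifting_def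
  apply clarify
  subgoal for lam mu by (intro exI[of _ lam] exI[of _ mu] conjI) (simp_all, blast)
  done

theorem proposition2:
  fixes \<sigma> \<sigma>' :: "real \<Rightarrow> real"
    and loss :: "vec \<Rightarrow> 'y \<Rightarrow> real" and dl :: "vec \<Rightarrow> 'y \<Rightarrow> vec"
    and ms :: "nat list" and th th' :: "(mat \<times> vec) list"
    and S :: "(vec \<times> 'y) list" and q mh :: nat
  assumes lin_seg: "\<exists>a b lam mu. a < b \<and> lam \<noteq> 0 \<and> (\<forall>t. a < t \<and> t < b \<longrightarrow> \<sigma> t = lam * t + mu)"
    and sigma_deriv: "\<And>t. \<sigma> differentiable (at t) \<Longrightarrow> (\<sigma> has_real_derivative \<sigma>' t) (at t)"
    and loss_grad: "\<And>y v G. (\<forall>i\<ge>last ms. v i = 0) \<Longrightarrow> grad_at (\<lambda>u. loss u y) (last ms) v G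
                      \<Longrightarrow> \<forall>i < last ms. dl v y i = G i"
    and L_pos: "length ms \<ge> 2"
    and th_len: "length th = length ms - 1"
    and q_lt: "q < length th"
    and mh_ge: "mh \<ge> min (ms ! q) (ms ! Suc q)"
    and crit: "critical \<sigma> \<sigma>' dl ms th S"
    and lift: "th' \<in> lifting \<sigma> ms S q mh th"
  shows "critical \<sigma> \<sigma>' dl (deeper_dims ms q mh) th' S"
proof -
  have "length ms = Suc (length th)"
    using L_pos th_len by simp
  then obtain lam mu where "one_layer_lifting \<sigma> \<sigma>' ms th th' S q mh lam mu"
    using ex_one_layer_lifting[OF lift sigma_deriv _ q_lt] by blast
  then interpret one_layer_lifting \<sigma> \<sigma>' dl ms th th' S q mh lam mu .
  show ?thesis
    by (rule critical_lifted[OF crit])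
qed

end
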